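(* Let $J$ be a finite nonempty index set, $\alpha\in(0,1/4]$, $D\ge0$, and let $T$ be a positive integer with $\alpha^2T\ge\ln(|J|+2.5\,T D|J|)$. Let $w^1\in\mathbb R^J$ have $w^1_j=1$ for all $j$. Suppose that for $i=1,\dots,T$ we are given (possibly depending on everything before) vectors $g^i,\tilde w^i\in\mathbb R^J$ satisfying $\|g^i\|_\infty\le2$, $\|w^i-\tilde w^i\|_\infty\le D$, and $\langle g^i,\tilde w^i\rangle\le0$, and we set $w^{i+1}_j=w^i_j(1+\alpha g^i_j)$ for all $j\in J$. Then $\frac1T\sum_{i=1}^T g^i_j\le5\alpha$ for every $j\in J$. *)

theory Defs
  imports Complex_Main
begin

end

theory Submission
  imports Defs
begin

text \<open>The potential \<open>\<Phi>\<^sub>i = \<Sum>\<^sub>j w\<^sub>i\<^sub>j\<close> grows slowly: \<open>\<langle>g\<^sub>i, w\<^sub>i\<rangle>\<close> exceeds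
  \<open>\<langle>g\<^sub>i, wt\<^sub>i\<rangle> \<le> 0\<close> by at most \<open>2D|J|\<close>, so each round adds at most \<open>2\<alpha>D|J|\<close>,
  and \<open>ln \<Phi>\<^sub>T\<^sub>+\<^sub>1 \<le> \<alpha>\<^sup>2T\<close>. A single weight \<open>w\<^sub>T\<^sub>+\<^sub>1\<^sub>,\<^sub>j\<close> is the product of the factors
  \<open>1 + \<alpha>g\<^sub>i\<^sub>j\<close>, and \<open>ln (1 + x) \<ge> x - x\<^sup>2\<close> for \<open>|x| \<le> 1/2\<close> bounds its logarithm below
  by \<open>\<alpha> \<Sum>\<^sub>i g\<^sub>i\<^sub>j - 4\<alpha>\<^sup>2T\<close>. As a weight is at most the potential,
  \<open>\<alpha> \<Sum>\<^sub>i g\<^sub>i\<^sub>j \<le> 5\<alpha>\<^sup>2T\<close>.\<close>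

lemma ln_one_plus_ge_sub_square_nonpos:
  fixes x :: real
  assumes "-1/2 \<le> x" and "x \<le> 0"
  shows "x - x\<^sup>2 \<le> ln (1 + x)"
proof -
  let ?f = "\<lambda>t::real. ln (1 + t) - t + t\<^sup>2"
  have "?f 0 \<le> ?f x"
  proof (rule DERIV_nonpos_imp_nonincreasing[of x 0 ?f])
    fix t :: real assume t: "x \<le> t" "t \<le> 0"
    then have pos: "1 + t > 0" using assms by simp
    have "DERIV ?f t :> (1 / (1 + t) - 1 + 2 * t)"
      using pos by (auto intro!: derivative_eq_intros)
    moreover have "1 / (1 + t) - 1 + 2 * t = t * (1 + 2 * t) / (1 + t)"
      using pos by (simp add: field_simps)
    moreover have "t * (1 + 2 * t) \<le> 0"
      using t assms by (intro mult_nonpos_nonneg) auto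
    ultimately show "\<exists>y. DERIV ?f t :> y \<and> y \<le> 0"
      using pos by (metis divide_nonpos_pos)
  qed (use assms in simp)
  then show ?thesis by simp
qed

lemma ln_one_plus_ge_sub_square:
  fixes x :: real
  assumes "\<bar>x\<bar> \<le> 1/2"
  shows "x - x\<^sup>2 \<le> ln (1 + x)"
  using assms ln_one_plus_ge_sub_square_nonpos[of x] ln_one_plus_pos_lower_bound[of x]
  by (cases "x \<ge> 0") auto

lemma ln_prod_one_plus_ge:
  fixes x :: "'i \<Rightarrow> real"
  assumes "finite I" and "\<And>i. i \<in> I \<Longrightarrow> \<bar>x i\<bar> \<le> 1/2"
  shows "(\<Sum>i\<in>I. x i - (x i)\<^sup>2) \<le> ln (\<Prod>i\<in>I. 1 + x i)"
proof -
  have "1 + x i \<noteq> 0" if "i \<in> I" for i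
    using assms(2)[OF that] by (auto simp: abs_le_iff)
  then have "ln (\<Prod>i\<in>I. 1 + x i) = (\<Sum>i\<in>I. ln (1 + x i))"
    using ln_prod[OF assms(1), of "\<lambda>i. 1 + x i"] by blast
  then show ?thesis
    using assms by (auto intro!: sum_mono ln_one_plus_ge_sub_square)
qed

lemma multiplicative_recurrence_prod:
  fixes w c :: "nat \<Rightarrow> 'b::comm_monoid_mult"
  assumes "\<And>i. i \<in> {1..k} \<Longrightarrow> w (i + 1) = w i * c i"
  shows "w (k + 1) = w 1 * (\<Prod>i=1..k. c i)"
  using assms
proof (induction k)
  case (Suc k)
  then show ?case by (simp add: mult.assoc)
qed simp

lemma le_of_bounded_increments:
  fixes f :: "nat \<Rightarrow> real"
  assumes "\<And>i. i \<in> {1..k} \<Longrightarrow> f (i + 1) \<le> f i + c"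
  shows "f (k + 1) \<le> f 1 + k * c"
  using assms
proof (induction k)
  case (Suc k)
  then have "f (Suc k + 1) \<le> f 1 + k * c + c" by force
  then show ?case by (simp add: algebra_simps)
qed simp

lemma inner_le_inner_perturbed:
  fixes g w wt :: "'a \<Rightarrow> real" and G D :: real
  assumes "finite J"
    and "\<And>j. j \<in> J \<Longrightarrow> \<bar>g j\<bar> \<le> G"
    and "\<And>j. j \<in> J \<Longrightarrow> \<bar>w j - wt j\<bar> \<le> D"
  shows "(\<Sum>j\<in>J. g j * w j) \<le> (\<Sum>j\<in>J. g j * wt j) + card J * (G * D)"
proof -
  have "g j * (w j - wt j) \<le> G * D" if "j \<in> J" for j
  proof -
    have "g j * (w j - wt j) \<le> \<bar>g j\<bar> * \<bar>w j - wt j\<bar>"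
      by (metis abs_ge_self abs_mult)
    also have "\<dots> \<le> G * D"
      using assms(2,3)[OF that] by (intro mult_mono) auto
    finally show ?thesis .
  qed
  then have "(\<Sum>j\<in>J. g j * (w j - wt j)) \<le> card J * (G * D)"
    using sum_mono[of J "\<lambda>j. g j * (w j - wt j)" "\<lambda>_. G * D"] by simp
  then show ?thesis
    by (simp add: algebra_simps sum_subtractf)
qed

lemma weight_sum_update_le:
  fixes g w wt :: "'a \<Rightarrow> real" and G D :: real
  assumes "finite J" and "0 \<le> \<alpha>"
    and "\<And>j. j \<in> J \<Longrightarrow> \<bar>g j\<bar> \<le> G"
    and "\<And>j. j \<in> J \<Longrightarrow> \<bar>w j - wt j\<bar> \<le> D"
    and "(\<Sum>j\<in>J. g j * wt j) \<le> 0"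
  shows "(\<Sum>j\<in>J. w j * (1 + \<alpha> * g j)) \<le> (\<Sum>j\<in>J. w j) + \<alpha> * G * D * card J"
proof -
  have "(\<Sum>j\<in>J. w j * (1 + \<alpha> * g j)) = (\<Sum>j\<in>J. w j) + \<alpha> * (\<Sum>j\<in>J. g j * w j)"
    by (simp add: algebra_simps sum.distrib sum_distrib_left)
  also have "\<dots> \<le> (\<Sum>j\<in>J. w j) + \<alpha> * (card J * (G * D))"
    using inner_le_inner_perturbed[of J g G w wt D] assms
    by (intro add_left_mono mult_left_mono) auto
  finally show ?thesis by (simp add: algebra_simps)
qed

lemma multiplicative_weights_total_le:
  fixes g wt w :: "nat \<Rightarrow> 'a \<Rightarrow> real" and G D :: real
  assumes "finite J" and "0 \<le> \<alpha>"
    and "\<And>i j. i \<in> {1..k} \<Longrightarrow> j \<in> J \<Longrightarrow> w (i + 1) j = w i j * (1 + \<alpha> * g i j)"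
    and "\<And>i j. i \<in> {1..k} \<Longrightarrow> j \<in> J \<Longrightarrow> \<bar>g i j\<bar> \<le> G"
    and "\<And>i j. i \<in> {1..k} \<Longrightarrow> j \<in> J \<Longrightarrow> \<bar>w i j - wt i j\<bar> \<le> D"
    and "\<And>i. i \<in> {1..k} \<Longrightarrow> (\<Sum>j\<in>J. g i j * wt i j) \<le> 0"
  shows "(\<Sum>j\<in>J. w (k + 1) j) \<le> (\<Sum>j\<in>J. w 1 j) + k * (\<alpha> * G * D * card J)"
proof (rule le_of_bounded_increments)
  fix i assume i: "i \<in> {1..k}"
  have "(\<Sum>j\<in>J. w (i + 1) j) = (\<Sum>j\<in>J. w i j * (1 + \<alpha> * g i j))"
    using assms(3)[OF i] by simp
  also have "\<dots> \<le> (\<Sum>j\<in>J. w i j) + \<alpha> * G * D * card J"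
    using assms(1,2,4-6) i by (intro weight_sum_update_le) auto
  finally show "(\<Sum>j\<in>J. w (i + 1) j) \<le> (\<Sum>j\<in>J. w i j) + \<alpha> * G * D * card J" .
qed

lemma multiplicative_weight_pos_ln_ge:
  fixes u x :: "nat \<Rightarrow> real"
  assumes "u 1 = 1"
    and "\<And>i. i \<in> {1..k} \<Longrightarrow> u (i + 1) = u i * (1 + x i)"
    and "\<And>i. i \<in> {1..k} \<Longrightarrow> \<bar>x i\<bar> \<le> 1/2"
  shows "u (k + 1) > 0" and "(\<Sum>i=1..k. x i - (x i)\<^sup>2) \<le> ln (u (k + 1))"
proof -
  have u_prod: "u (k + 1) = (\<Prod>i=1..k. 1 + x i)"
    using multiplicative_recurrence_prod[of k u "\<lambda>i. 1 + x i"] assms(1,2) by simp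
  show "u (k + 1) > 0"
    unfolding u_prod using assms(3) by (force intro: prod_pos)
  show "(\<Sum>i=1..k. x i - (x i)\<^sup>2) \<le> ln (u (k + 1))"
    unfolding u_prod using assms(3) by (intro ln_prod_one_plus_ge) auto
qed

theorem theorem2p3:
  fixes J :: "'a set" and \<alpha> D :: real and T :: nat
    and g wt w :: "nat \<Rightarrow> 'a \<Rightarrow> real"
  assumes "finite J" and "J \<noteq> {}"
    and "0 < \<alpha>" and "\<alpha> \<le> 1/4" and "D \<ge> 0" and "T \<ge> 1"
    and "\<alpha>^2 * real T \<ge> ln (real (card J) + 2.5 * real T * D * real (card J))"
    and "\<forall>j\<in>J. w 1 j = 1"
    and "\<forall>i\<in>{1..T}. \<forall>j\<in>J. w (i + 1) j = w i j * (1 + \<alpha> * g i j)"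
    and "\<forall>i\<in>{1..T}. \<forall>j\<in>J. \<bar>g i j\<bar> \<le> 2"
    and "\<forall>i\<in>{1..T}. \<forall>j\<in>J. \<bar>w i j - wt i j\<bar> \<le> D"
    and "\<forall>i\<in>{1..T}. (\<Sum>j\<in>J. g i j * wt i j) \<le> 0"
  shows "\<forall>j\<in>J. (1 / real T) * (\<Sum>i=1..T. g i j) \<le> 5 * \<alpha>"
proof
  fix j assume "j \<in> J"
  have small_step: "\<bar>\<alpha> * g i j'\<bar> \<le> 1/2" "(\<alpha> * g i j')\<^sup>2 \<le> 4 * \<alpha>\<^sup>2"
    if "i \<in> {1..T}" "j' \<in> J" for i j'
  proof -
    have "\<bar>\<alpha> * g i j'\<bar> \<le> \<alpha> * 2"
      using assms(3,10) that by (simp add: abs_mult mult_left_mono)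
    then show "\<bar>\<alpha> * g i j'\<bar> \<le> 1/2" "(\<alpha> * g i j')\<^sup>2 \<le> 4 * \<alpha>\<^sup>2"
      using assms(3,4) abs_le_square_iff[of "\<alpha> * g i j'" "\<alpha> * 2"] by (auto simp: power_mult_distrib)
  qed
  have weight_pos: "w (T + 1) j' > 0" if "j' \<in> J" for j'
    using assms(8,9) small_step(1) that by (intro multiplicative_weight_pos_ln_ge(1)) auto
  have "w (T + 1) j \<le> (\<Sum>j'\<in>J. w (T + 1) j')"
    using assms(1) \<open>j \<in> J\<close> weight_pos by (intro member_le_sum) (auto intro: less_imp_le)
  also have "\<dots> \<le> (\<Sum>j'\<in>J. w 1 j') + T * (\<alpha> * 2 * D * card J)"
    using assms(1,3,9-12) by (intro multiplicative_weights_total_le) auto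
  also have "\<dots> \<le> card J + 2.5 * T * D * card J"
    using assms(4,5,8) mult_right_mono[of "\<alpha> * 2" "5 / 2" "T * D * card J"] by (simp add: algebra_simps)
  finally have "ln (w (T + 1) j) \<le> \<alpha>\<^sup>2 * T"
    using assms(7) weight_pos[OF \<open>j \<in> J\<close>] by (smt (verit) ln_mono)
  moreover have "(\<Sum>i=1..T. \<alpha> * g i j - (\<alpha> * g i j)\<^sup>2) \<le> ln (w (T + 1) j)"
    using assms(8,9) small_step(1) \<open>j \<in> J\<close> by (intro multiplicative_weight_pos_ln_ge(2)) auto
  moreover have "(\<Sum>i=1..T. (\<alpha> * g i j)\<^sup>2) \<le> (\<Sum>i=1..T. 4 * \<alpha>\<^sup>2)"
    using small_step(2) \<open>j \<in> J\<close> by (intro sum_mono) auto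
  ultimately have "\<alpha> * (\<Sum>i=1..T. g i j) \<le> \<alpha> * (5 * \<alpha> * T)"
    by (simp add: sum_subtractf sum_distrib_left power2_eq_square algebra_simps)
  then show "(1 / real T) * (\<Sum>i=1..T. g i j) \<le> 5 * \<alpha>"
    using assms(3,6) by (simp add: field_simps)
qed

end
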